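(* Let $B$ be a soluble skew left brace and let $r_B\colon B\times B\to B\times B$, $r_B(a,b)=(\lambda_a(b),\lambda_a(b)^{-1}ab)$, be its associated solution of the Yang–Baxter equation. Then $(B,r_B)$ is uniformly multidecomposable.
   Context: A skew left brace (brace) is a set $B$ with two group structures $(B,+)$ and $(B,\cdot)$ (product by juxtaposition) such that $a(b+c)=ab-a+ac$; common identity $0$; $\lambda_a(b)=-a+ab$. An ideal of $B$ is a subset that is a normal subgroup of $(B,+)$ and of $(B,\cdot)$ and is invariant under all $\lambda_b$. For ideals $I,J$, $[I,J]$ is the smallest ideal containing $[I,J]_+$, $[I,J]_\cdot$ and all $ij-(i+j)$ ($i\in I,j\in J$). $B$ is abelian if $[B,B]=0$ (i.e. $ab=a+b=b+a$ for all $a,b$). $B$ is soluble if there is a chain $B=I_0\supseteq I_1\supseteq\cdots\supseteq I_n=0$ with each $I_i$ an ideal of the brace $I_{i-1}$ and $I_{i-1}/I_i$ abelian. A solution $(X,r)$ of the YBE is a set $X$ with a bijection $r:X\times X\to X\times X$ satisfying $r_{12}r_{23}r_{12}=r_{23}r_{12}r_{23}$ ($r_{12}=r\times\mathrm{id}$, $r_{23}=\mathrm{id}\times r$), both of whose components are bijective (non-degenerate). A partition $\mathcal P$ of a set is uniform if all its blocks have the same cardinality. For a partition $\mathcal P=\{X_i\}_{i\in I}$ of $X$, $(X,r)$ is (uniformly) $\mathcal P$-decomposable if ($\mathcal P$ is uniform and) $r(X_i\times X_j)=X_j\times X_i$ for all $i,j$. $(X,r)$ is (uniformly) multidecomposable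 if there is a chain $X=X_0\supseteq X_1\supseteq\cdots\supseteq X_n$ with $|X_n|=1$ such that for each $0\le i\le n-1$ there is a (uniform) partition $\mathcal P_i$ of $X_i$ with $X_{i+1}\in\mathcal P_i$ and $(X_i,r|_{X_i\times X_i})$ (uniformly) $\mathcal P_i$-decomposable. *)

theory Defs
  imports "HOL-Algebra.Coset" "HOL-Library.Disjoint_Sets" "HOL-Library.Equipollence"
begin

text \<open>A skew left brace is given by two group structures A (additive, written with
  the HOL-Algebra operation mult A) and M (multiplicative) on the same carrier with
  the same identity, satisfying a(b+c) = ab - a + ac.\<close>

definition skew_brace :: "('a, 'b) monoid_scheme \<Rightarrow> ('a, 'c) monoid_scheme \<Rightarrow> bool" where
  "skew_brace A M \<longleftrightarrow> group A \<and> group M \<and> carrier A = carrier M \<and> \<one>\<^bsub>A\<^esub> = \<one>\<^bsub>M\<^esub> \<and>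
     (\<forall>a\<in>carrier A. \<forall>b\<in>carrier A. \<forall>c\<in>carrier A.
        a \<otimes>\<^bsub>M\<^esub> (b \<otimes>\<^bsub>A\<^esub> c) = (a \<otimes>\<^bsub>M\<^esub> b) \<otimes>\<^bsub>A\<^esub> (inv\<^bsub>A\<^esub> a) \<otimes>\<^bsub>A\<^esub> (a \<otimes>\<^bsub>M\<^esub> c))"

definition brace_lambda :: "('a, 'b) monoid_scheme \<Rightarrow> ('a, 'c) monoid_scheme \<Rightarrow> 'a \<Rightarrow> 'a \<Rightarrow> 'a" where
  "brace_lambda A M a b = inv\<^bsub>A\<^esub> a \<otimes>\<^bsub>A\<^esub> (a \<otimes>\<^bsub>M\<^esub> b)"

definition brace_ideal :: "('a, 'b) monoid_scheme \<Rightarrow> ('a, 'c) monoid_scheme \<Rightarrow> 'a set \<Rightarrow> bool" where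
  "brace_ideal A M I \<longleftrightarrow> I \<lhd> A \<and> I \<lhd> M \<and>
     (\<forall>b\<in>carrier A. \<forall>x\<in>I. brace_lambda A M b x \<in> I)"

text \<open>The quotient brace J/I (I an ideal of J) is abelian: in the quotient,
  xy = x+y = y+x for all classes, i.e. the corresponding differences lie in I.\<close>
definition brace_abelian_quotient ::
  "('a, 'b) monoid_scheme \<Rightarrow> ('a, 'c) monoid_scheme \<Rightarrow> 'a set \<Rightarrow> 'a set \<Rightarrow> bool" where
  "brace_abelian_quotient A M J I \<longleftrightarrow>
     (\<forall>a\<in>J. \<forall>b\<in>J.
        inv\<^bsub>A\<^esub> (a \<otimes>\<^bsub>A\<^esub> b) \<otimes>\<^bsub>A\<^esub> (a \<otimes>\<^bsub>M\<^esub> b) \<in> I \<and>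
        inv\<^bsub>A\<^esub> (b \<otimes>\<^bsub>A\<^esub> a) \<otimes>\<^bsub>A\<^esub> (a \<otimes>\<^bsub>A\<^esub> b) \<in> I)"

definition soluble_brace :: "('a, 'b) monoid_scheme \<Rightarrow> ('a, 'c) monoid_scheme \<Rightarrow> bool" where
  "soluble_brace A M \<longleftrightarrow> (\<exists>(I :: nat \<Rightarrow> 'a set) n.
     I 0 = carrier A \<and> I n = {\<one>\<^bsub>A\<^esub>} \<and>
     (\<forall>i<n. I (Suc i) \<subseteq> I i \<and>
        brace_ideal (A\<lparr>carrier := I i\<rparr>) (M\<lparr>carrier := I i\<rparr>) (I (Suc i)) \<and>
        brace_abelian_quotient A M (I i) (I (Suc i))))"

definition brace_solution :: "('a, 'b) monoid_scheme \<Rightarrow> ('a, 'c) monoid_scheme \<Rightarrow> 'a \<times> 'a \<Rightarrow> 'a \<times> 'a" where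
  "brace_solution A M p = (case p of (a, b) \<Rightarrow>
     (brace_lambda A M a b, inv\<^bsub>M\<^esub> (brace_lambda A M a b) \<otimes>\<^bsub>M\<^esub> a \<otimes>\<^bsub>M\<^esub> b))"

definition uniform_partition :: "'a set \<Rightarrow> 'a set set \<Rightarrow> bool" where
  "uniform_partition X P \<longleftrightarrow> partition_on X P \<and> (\<forall>Y\<in>P. \<forall>Z\<in>P. Y \<approx> Z)"

definition decomposable :: "('a \<times> 'a \<Rightarrow> 'a \<times> 'a) \<Rightarrow> 'a set set \<Rightarrow> bool" where
  "decomposable r P \<longleftrightarrow> (\<forall>Y\<in>P. \<forall>Z\<in>P. r ` (Y \<times> Z) = Z \<times> Y)"

definition uniformly_multidecomposable :: "'a set \<Rightarrow> ('a \<times> 'a \<Rightarrow> 'a \<times> 'a) \<Rightarrow> bool" where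
  "uniformly_multidecomposable X r \<longleftrightarrow> (\<exists>(Xs :: nat \<Rightarrow> 'a set) n.
     Xs 0 = X \<and> (\<exists>x. Xs n = {x}) \<and>
     (\<forall>i<n. Xs (Suc i) \<subseteq> Xs i \<and>
        (\<exists>P. uniform_partition (Xs i) P \<and> Xs (Suc i) \<in> P \<and> decomposable r P)))"

end

theory Submission
  imports Defs
begin

text \<open>Along the solubility chain \<open>B = I\<^sub>0 \<supseteq> I\<^sub>1 \<supseteq> \<dots> \<supseteq> I\<^sub>n = 0\<close>, the additive cosets of
  \<open>I\<^sub>i\<^sub>+\<^sub>1\<close> in \<open>I\<^sub>i\<close> partition \<open>I\<^sub>i\<close> into blocks of equal size, one of them \<open>I\<^sub>i\<^sub>+\<^sub>1\<close> itself.
  As \<open>I\<^sub>i/I\<^sub>i\<^sub>+\<^sub>1\<close> is abelian, modulo \<open>I\<^sub>i\<^sub>+\<^sub>1\<close> we have \<open>\<lambda>\<^sub>a(b) \<equiv> b\<close> and \<open>\<lambda>\<^sub>a(b)\<^sup>-\<^sup>1ab \<equiv> a\<close>, so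
  \<open>r\<^sub>B\<close> maps \<open>X \<times> Y\<close> into \<open>Y \<times> X\<close> for any two blocks; since \<open>r\<^sub>B\<close> maps \<open>I\<^sub>i \<times> I\<^sub>i\<close> onto itself,
  these inclusions are equalities. Only the two group structures and the abelian quotients
  are used, not the brace identity.\<close>

lemma decomposable_if_blocks_swapped:
  assumes part: "partition_on X P" and onto: "X \<times> X \<subseteq> r ` (X \<times> X)"
    and swap: "\<And>Y Z. Y \<in> P \<Longrightarrow> Z \<in> P \<Longrightarrow> r ` (Y \<times> Z) \<subseteq> Z \<times> Y"
  shows "decomposable r P"
  unfolding decomposable_def
proof (intro ballI equalityI subsetI)
  fix Y Z p assume Y: "Y \<in> P" and Z: "Z \<in> P" and p: "p \<in> Z \<times> Y"
  then have "p \<in> X \<times> X" using partition_onD1[OF part] by blast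
  then obtain x y where xy: "x \<in> X" "y \<in> X" and p_eq: "p = r (x, y)" using onto by blast
  then obtain Y' Z' where Y': "Y' \<in> P" "x \<in> Y'" and Z': "Z' \<in> P" "y \<in> Z'"
    using partition_onD1[OF part] by blast
  have "p \<in> Z' \<times> Y'" using swap[OF Y'(1) Z'(1)] Y' Z' p_eq by blast
  then have "Y' = Y" "Z' = Z"
    using p Y Z Y' Z' disjointD[OF partition_onD2[OF part]] by blast+
  then show "p \<in> r ` (Y \<times> Z)" using p_eq Y' Z' by blast
qed (use swap in blast)

lemma (in group) uniform_partition_rcosets:
  assumes "subgroup H G"
  shows "uniform_partition (carrier G) (rcosets H)"
  unfolding uniform_partition_def partition_on_def
proof (intro conjI ballI)
  show "\<Union> (rcosets H) = carrier G" using rcosets_part_G[OF assms] .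
  show "disjoint (rcosets H)" using rcos_disjoint[OF assms] by (simp add: disjoint_def pairwise_def disjnt_def)
  show "{} \<notin> rcosets H" using rcos_self[OF _ assms] unfolding RCOSETS_def by blast
  have "H \<approx> R" if "R \<in> rcosets H" for R
    using card_cosets_equal[OF that subgroup.subset[OF assms]] by (auto simp: eqpoll_def)
  then show "Y \<approx> Z" if "Y \<in> rcosets H" "Z \<in> rcosets H" for Y Z
    using that eqpoll_sym eqpoll_trans by blast
qed

lemma (in normal) rcos_eq_if_inv_mult_mem:
  assumes "x \<in> carrier G" "y \<in> carrier G" "inv x \<otimes> y \<in> H"
  shows "H #> x = H #> y"
proof -
  have "y \<otimes> inv x = x \<otimes> (inv x \<otimes> y) \<otimes> inv x"
    using assms by (simp add: m_assoc[symmetric])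
  also have "\<dots> \<in> H" using inv_op_closed2 assms by blast
  finally have "y \<in> H #> x" using rcos_module assms is_group by blast
  then show ?thesis using repr_independence assms subgroup_axioms by blast
qed

locale sub_bigroup = A: group A + M: group M
  for A :: "('a, 'b) monoid_scheme" and M :: "('a, 'c) monoid_scheme" +
  fixes K :: "'a set"
  assumes same_carrier: "carrier M = carrier A"
    and subgroup_A: "subgroup K A" and subgroup_M: "subgroup K M"
begin

lemma in_carrier_A: "x \<in> K \<Longrightarrow> x \<in> carrier A"
  using subgroup.mem_carrier[OF subgroup_A] .

lemma in_carrier_M: "x \<in> K \<Longrightarrow> x \<in> carrier M"
  using in_carrier_A same_carrier by simp

lemmas closed =
  subgroup.m_closed[OF subgroup_A] subgroup.m_inv_closed[OF subgroup_A]
  subgroup.m_closed[OF subgroup_M] subgroup.m_inv_closed[OF subgroup_M]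

lemma brace_lambda_closed: "x \<in> K \<Longrightarrow> y \<in> K \<Longrightarrow> brace_lambda A M x y \<in> K"
  unfolding brace_lambda_def by (intro closed)

lemma brace_solution_closed:
  assumes "x \<in> K" "y \<in> K"
  shows "brace_solution A M (x, y) \<in> K \<times> K"
  using assms brace_lambda_closed closed by (simp add: brace_solution_def)

lemma brace_solution_onto: "K \<times> K \<subseteq> brace_solution A M ` (K \<times> K)"
proof clarify
  fix u v assume u: "u \<in> K" and v: "v \<in> K"
  define x where "x = (u \<otimes>\<^bsub>M\<^esub> v) \<otimes>\<^bsub>A\<^esub> inv\<^bsub>A\<^esub> u"
  define y where "y = inv\<^bsub>M\<^esub> x \<otimes>\<^bsub>M\<^esub> u \<otimes>\<^bsub>M\<^esub> v"
  have x: "x \<in> K" unfolding x_def using u v by (intro closed)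
  have y: "y \<in> K" unfolding y_def using u v x by (intro closed)
  have xy: "x \<otimes>\<^bsub>M\<^esub> y = u \<otimes>\<^bsub>M\<^esub> v"
    unfolding y_def using u v x in_carrier_M by (simp add: M.m_assoc[symmetric])
  have "brace_lambda A M x y = u"
    unfolding brace_lambda_def xy unfolding x_def
    using u v closed in_carrier_A by (simp add: A.inv_mult_group A.m_assoc)
  moreover have "inv\<^bsub>M\<^esub> u \<otimes>\<^bsub>M\<^esub> x \<otimes>\<^bsub>M\<^esub> y = v"
    using u v x y xy in_carrier_M by (simp add: M.m_assoc M.inv_solve_left')
  ultimately have "brace_solution A M (x, y) = (u, v)" by (simp add: brace_solution_def)
  then show "(u, v) \<in> brace_solution A M ` (K \<times> K)" using x y by force
qed

text \<open>With \<open>l = \<lambda>\<^sub>x(y)\<close> and \<open>w = l\<^sup>-\<^sup>1xy\<close>: \<open>\<pi> l = \<pi>(-x + (x + y)) = \<pi> y\<close>, and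
  \<open>\<pi> l + \<pi> w = \<pi>(lw) = \<pi>(xy) = \<pi>(y + x)\<close> gives \<open>\<pi> w = \<pi> x\<close> by cancellation.\<close>

lemma brace_solution_modulo_hom:
  assumes hom: "\<pi> \<in> hom (A\<lparr>carrier := K\<rparr>) Q" and "group Q"
    and mult_eq_add: "\<And>a b. a \<in> K \<Longrightarrow> b \<in> K \<Longrightarrow> \<pi> (a \<otimes>\<^bsub>M\<^esub> b) = \<pi> (a \<otimes>\<^bsub>A\<^esub> b)"
    and add_comm: "\<And>a b. a \<in> K \<Longrightarrow> b \<in> K \<Longrightarrow> \<pi> (a \<otimes>\<^bsub>A\<^esub> b) = \<pi> (b \<otimes>\<^bsub>A\<^esub> a)"
    and x: "x \<in> K" and y: "y \<in> K"
  shows "\<pi> (fst (brace_solution A M (x, y))) = \<pi> y \<and> \<pi> (snd (brace_solution A M (x, y))) = \<pi> x"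
proof -
  interpret Q: group Q by fact
  have hom_add: "\<pi> (a \<otimes>\<^bsub>A\<^esub> b) = \<pi> a \<otimes>\<^bsub>Q\<^esub> \<pi> b" if "a \<in> K" "b \<in> K" for a b
    using hom_mult[OF hom, of a b] that by simp
  have in_Q: "\<pi> a \<in> carrier Q" if "a \<in> K" for a
    using hom that by (auto simp: hom_def)
  define l where "l = brace_lambda A M x y"
  define w where "w = inv\<^bsub>M\<^esub> l \<otimes>\<^bsub>M\<^esub> x \<otimes>\<^bsub>M\<^esub> y"
  have l: "l \<in> K" and w: "w \<in> K"
    unfolding l_def w_def using x y brace_lambda_closed by (auto intro!: closed)
  have "\<pi> l = \<pi> (inv\<^bsub>A\<^esub> x) \<otimes>\<^bsub>Q\<^esub> \<pi> (x \<otimes>\<^bsub>A\<^esub> y)"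
    unfolding l_def brace_lambda_def using x y by (simp add: hom_add mult_eq_add closed)
  also have "\<dots> = \<pi> y"
    using x y in_carrier_A by (simp add: hom_add[symmetric] closed A.m_assoc[symmetric])
  finally have pi_l: "\<pi> l = \<pi> y" .
  have "l \<otimes>\<^bsub>M\<^esub> w = x \<otimes>\<^bsub>M\<^esub> y"
    unfolding w_def using x y l in_carrier_M by (simp add: M.m_assoc[symmetric])
  then have "\<pi> y \<otimes>\<^bsub>Q\<^esub> \<pi> w = \<pi> y \<otimes>\<^bsub>Q\<^esub> \<pi> x"
    using x y l w pi_l by (metis hom_add mult_eq_add add_comm)
  then have "\<pi> w = \<pi> x" using x y w in_Q by simp
  then show ?thesis using pi_l unfolding l_def w_def brace_solution_def by simp
qed

lemma brace_solution_rcosets: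
  assumes normal: "J \<lhd> A\<lparr>carrier := K\<rparr>" and abelian: "brace_abelian_quotient A M K J"
    and x: "x \<in> K" and y: "y \<in> K"
  shows "J #>\<^bsub>A\<lparr>carrier := K\<rparr>\<^esub> fst (brace_solution A M (x, y)) = J #>\<^bsub>A\<lparr>carrier := K\<rparr>\<^esub> y \<and>
    J #>\<^bsub>A\<lparr>carrier := K\<rparr>\<^esub> snd (brace_solution A M (x, y)) = J #>\<^bsub>A\<lparr>carrier := K\<rparr>\<^esub> x"
proof -
  interpret N: normal J "A\<lparr>carrier := K\<rparr>" by (fact normal)
  have rcos_eq: "J #>\<^bsub>A\<lparr>carrier := K\<rparr>\<^esub> a = J #>\<^bsub>A\<lparr>carrier := K\<rparr>\<^esub> b"
    if "a \<in> K" "b \<in> K" "inv\<^bsub>A\<^esub> a \<otimes>\<^bsub>A\<^esub> b \<in> J" for a b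
    using N.rcos_eq_if_inv_mult_mem[of a b] that A.m_inv_consistent[OF subgroup_A] by simp
  show ?thesis
  proof (rule brace_solution_modulo_hom[OF N.r_coset_hom_Mod N.factorgroup_is_group _ _ x y])
    fix a b assume "a \<in> K" "b \<in> K"
    then show "J #>\<^bsub>A\<lparr>carrier := K\<rparr>\<^esub> (a \<otimes>\<^bsub>M\<^esub> b) = J #>\<^bsub>A\<lparr>carrier := K\<rparr>\<^esub> (a \<otimes>\<^bsub>A\<^esub> b)"
      and "J #>\<^bsub>A\<lparr>carrier := K\<rparr>\<^esub> (a \<otimes>\<^bsub>A\<^esub> b) = J #>\<^bsub>A\<lparr>carrier := K\<rparr>\<^esub> (b \<otimes>\<^bsub>A\<^esub> a)"
      using abelian rcos_eq closed unfolding brace_abelian_quotient_def by metis+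
  qed
qed

lemma abelian_quotient_decomposition:
  assumes normal: "J \<lhd> A\<lparr>carrier := K\<rparr>" and abelian: "brace_abelian_quotient A M K J"
  shows "\<exists>P. uniform_partition K P \<and> J \<in> P \<and> decomposable (brace_solution A M) P"
proof (intro exI conjI)
  interpret N: normal J "A\<lparr>carrier := K\<rparr>" by (fact normal)
  let ?cls = "\<lambda>a. J #>\<^bsub>A\<lparr>carrier := K\<rparr>\<^esub> a"
  let ?P = "rcosets\<^bsub>A\<lparr>carrier := K\<rparr>\<^esub> J"
  show "uniform_partition K ?P"
    using N.uniform_partition_rcosets[OF N.subgroup_axioms] by simp
  then have partition: "partition_on K ?P" by (simp add: uniform_partition_def)
  show "J \<in> ?P"
    using N.rcosetsI[of J "\<one>\<^bsub>A\<^esub>"] N.subset subgroup.one_closed[OF subgroup_A] in_carrier_A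
    by (simp add: subset_eq)
  have block_iff: "z \<in> ?cls c \<longleftrightarrow> z \<in> K \<and> ?cls z = ?cls c" if "c \<in> K" for c z
    using N.r_coset_subset_G[of J c] N.repr_independence[of z J c] N.rcos_self[of z J]
      N.subset N.subgroup_axioms that by auto
  show "decomposable (brace_solution A M) ?P"
  proof (rule decomposable_if_blocks_swapped[OF partition brace_solution_onto])
    fix Y Z assume "Y \<in> ?P" "Z \<in> ?P"
    then obtain a b where a: "a \<in> K" "Y = ?cls a" and b: "b \<in> K" "Z = ?cls b"
      unfolding RCOSETS_def by auto
    show "brace_solution A M ` (Y \<times> Z) \<subseteq> Z \<times> Y"
    proof clarify
      fix x y u v assume "x \<in> Y" "y \<in> Z" and uv: "(u, v) = brace_solution A M (x, y)"
      then have x: "x \<in> K" "?cls x = ?cls a" and y: "y \<in> K" "?cls y = ?cls b"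
        using block_iff a b by auto
      have "u \<in> K \<and> v \<in> K" using brace_solution_closed[OF x(1) y(1)] uv by (metis mem_Sigma_iff)
      moreover have "?cls u = ?cls y \<and> ?cls v = ?cls x"
        using brace_solution_rcosets[OF normal abelian x(1) y(1)] uv by (metis fst_conv snd_conv)
      ultimately show "u \<in> Z \<and> v \<in> Y" using block_iff a b x y by auto
    qed
  qed
qed

end

lemma sub_bigroupI:
  assumes "group A" "group M" "carrier M = carrier A" "K \<subseteq> carrier A"
    and "J \<lhd> A\<lparr>carrier := K\<rparr>" "J' \<lhd> M\<lparr>carrier := K\<rparr>"
  shows "sub_bigroup A M K"
proof -
  have "subgroup K A" "subgroup K M"
    using assms group.group_incl_imp_subgroup normal.axioms(2) by metis+
  then show ?thesis using assms by (simp add: sub_bigroup_def sub_bigroup_axioms_def)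
qed

theorem theoremC:
  fixes A :: "('a, 'b) monoid_scheme" and M :: "('a, 'c) monoid_scheme"
  assumes "skew_brace A M" and "soluble_brace A M"
  shows "uniformly_multidecomposable (carrier A) (brace_solution A M)"
proof -
  have groups: "group A" "group M" "carrier M = carrier A"
    using assms(1) unfolding skew_brace_def by auto
  obtain I :: "nat \<Rightarrow> 'a set" and n where I0: "I 0 = carrier A" and In: "I n = {\<one>\<^bsub>A\<^esub>}"
    and chain: "\<And>i. i < n \<Longrightarrow> I (Suc i) \<subseteq> I i \<and>
        brace_ideal (A\<lparr>carrier := I i\<rparr>) (M\<lparr>carrier := I i\<rparr>) (I (Suc i)) \<and>
        brace_abelian_quotient A M (I i) (I (Suc i))"
    using assms(2) unfolding soluble_brace_def by blast
  have I_sub: "I i \<subseteq> carrier A" if "i \<le> n" for i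
    using that
  proof (induction i)
    case (Suc i)
    then show ?case using chain[of i] by auto
  qed (simp add: I0)
  have "\<exists>P. uniform_partition (I i) P \<and> I (Suc i) \<in> P \<and> decomposable (brace_solution A M) P"
    if "i < n" for i
  proof -
    have "sub_bigroup A M (I i)"
      using chain[OF that] I_sub[of i] that groups
      by (intro sub_bigroupI[of A M _ "I (Suc i)" "I (Suc i)"]) (auto simp: brace_ideal_def)
    then show ?thesis
      using chain[OF that] sub_bigroup.abelian_quotient_decomposition
      by (metis brace_ideal_def)
  qed
  then show ?thesis
    unfolding uniformly_multidecomposable_def using I0 In chain by blast
qed

end
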